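(* Consider M-FACTORING, and let $n\geqslant 2$, where each option is a non-trivial disjunctive sum of a factoring of $n$. Then $\mathcal{SG}(n)=\Omega(n)-1$. If no two distinct components may contain the same prime number, then $\mathcal{SG}(n)=\omega(n)-1$.
   Context: M-FACTORING is the impartial normal-play heap game where a move from a heap $n$ replaces it by the disjunctive sum $a_1+\cdots+a_k$ of a factorization $n=a_1a_2\cdots a_k$ with $k\ge2$ and $1<a_1\le\cdots\le a_k$. $\mathcal{SG}$ denotes the Sprague-Grundy value (mex rule, nim-sum). $\Omega(n)$ counts prime factors with multiplicity, $\omega(n)$ counts distinct prime factors. *)

theory Defs
  imports "HOL-Computational_Algebra.Primes"
begin

definition mex :: "nat set \<Rightarrow> nat" where
  "mex S = (LEAST m. m \<notin> S)"

definition nim_sum :: "nat list \<Rightarrow> nat" where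
  "nim_sum xs = foldr (\<lambda>x y. Bit_Operations.xor x y) xs 0"

definition factoring_option :: "(nat list \<Rightarrow> bool) \<Rightarrow> nat \<Rightarrow> nat list \<Rightarrow> bool" where
  "factoring_option ok n as \<longleftrightarrow>
     length as \<ge> 2 \<and> sorted as \<and> (\<forall>a\<in>set as. a > 1) \<and> prod_list as = n \<and> ok as"

text \<open>Sprague-Grundy function of the factoring game with side condition ok,
  defined by well-founded recursion (every component is strictly smaller than n).\<close>
definition SG_fact :: "(nat list \<Rightarrow> bool) \<Rightarrow> nat \<Rightarrow> nat" where
  "SG_fact ok = wfrec less_than
     (\<lambda>g n. mex {nim_sum (map g as) | as. factoring_option ok n as})"

definition SG_M :: "nat \<Rightarrow> nat" where
  "SG_M = SG_fact (\<lambda>_. True)"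

definition SG_M_coprime :: "nat \<Rightarrow> nat" where
  "SG_M_coprime = SG_fact (\<lambda>as. \<forall>i j. i < j \<and> j < length as \<longrightarrow> coprime (as ! i) (as ! j))"

definition bigOmega :: "nat \<Rightarrow> nat" where
  "bigOmega n = size (prime_factorization n)"

definition smallomega :: "nat \<Rightarrow> nat" where
  "smallomega n = card (prime_factors n)"

end

theory Submission
  imports Defs
begin

(* Both lengths, len = \<Omega> for M-FACTORING and len = \<omega> when components must be pairwise
   coprime, are additive over the components of an admissible factoring and are at least 1 on
   each component. By induction every component a has SG value len a - 1, so the nim-sum of an
   option a_1 ... a_k is at most \<Sum>(len a_i - 1) = len n - k \<le> len n - 2. Conversely, n is
   a product of len n admissible atoms (the primes, resp. the maximal prime powers); merging
   t + 1 of them into one component and keeping the others single gives an option of nim-sum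
   t for every t < len n - 1. Hence the mex is len n - 1. *)

lemma xor_le_add: "Bit_Operations.xor m n \<le> m + (n :: nat)"
proof (induction m arbitrary: n rule: less_induct)
  case (less m)
  show ?case
  proof (cases "m = 0")
    case False
    have "of_bool (odd m \<noteq> odd n) \<le> m mod 2 + n mod 2"
      by (auto simp: odd_iff_mod_2_eq_one)
    moreover have "Bit_Operations.xor (m div 2) (n div 2) \<le> m div 2 + n div 2"
      using less False by simp
    ultimately have "of_bool (odd m \<noteq> odd n) + 2 * Bit_Operations.xor (m div 2) (n div 2)
        \<le> m mod 2 + n mod 2 + 2 * (m div 2 + n div 2)"
      by (intro add_mono mult_le_mono2)
    then show ?thesis
      by (simp add: xor_nat_rec[of m n])
  qed simp
qed

lemma nim_sum_Nil [simp]: "nim_sum [] = 0"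
  by (simp add: nim_sum_def)

lemma nim_sum_Cons [simp]: "nim_sum (x # xs) = Bit_Operations.xor x (nim_sum xs)"
  by (simp add: nim_sum_def)

lemma nim_sum_le_sum_list: "nim_sum xs \<le> sum_list xs"
  by (induction xs) (auto intro: order_trans[OF xor_le_add])

lemma nim_sum_mset_eq: "mset xs = mset ys \<Longrightarrow> nim_sum xs = nim_sum ys"
  unfolding nim_sum_def foldr_conv_fold
  by (rule fun_cong[of _ _ 0], rule fold_multiset_equiv) (auto simp: fun_eq_iff xor.left_commute)

lemma one_less_prod_list:
  "xs \<noteq> [] \<Longrightarrow> (\<forall>x\<in>set xs. 1 < x) \<Longrightarrow> 1 < prod_list (xs :: nat list)"
proof (induction xs)
  case (Cons x xs)
  then have "1 \<le> prod_list xs"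
    by (cases "xs = []") auto
  then have "x \<le> x * prod_list xs"
    by simp
  moreover have "1 < x"
    using Cons.prems by simp
  ultimately have "1 < x * prod_list xs"
    by linarith
  then show ?case
    by simp
qed simp

lemma factoring_option_less:
  assumes "factoring_option ok n as" "a \<in> set as"
  shows "a < n"
proof -
  obtain us vs where as: "as = us @ a # vs"
    using assms(2) by (meson split_list)
  have "1 < prod_list (us @ vs)"
    using assms(1) by (intro one_less_prod_list) (auto simp: factoring_option_def as)
  moreover have "n = a * prod_list (us @ vs)" "0 < a"
    using assms(1) by (auto simp: factoring_option_def as)
  ultimately show ?thesis
    by simp
qed

lemma SG_fact_eq:
  "SG_fact ok n = mex {nim_sum (map (SG_fact ok) as) | as. factoring_option ok n as}"
proof -
  have cut_eq: "map (cut (SG_fact ok) less_than n) as = map (SG_fact ok) as"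
    if "factoring_option ok n as" for as
    using factoring_option_less[OF that] by (auto intro: cut_apply)
  have "SG_fact ok n
      = mex {nim_sum (map (cut (SG_fact ok) less_than n) as) | as. factoring_option ok n as}"
    unfolding SG_fact_def by (subst wfrec) simp_all
  also have "\<dots> = mex {nim_sum (map (SG_fact ok) as) | as. factoring_option ok n as}"
    using cut_eq by (intro arg_cong[of _ _ mex] Collect_cong) metis
  finally show ?thesis .
qed

lemma mex_eqI:
  "(\<And>v. v \<in> S \<Longrightarrow> v < m) \<Longrightarrow> (\<And>v. v < m \<Longrightarrow> v \<in> S) \<Longrightarrow> mex S = m"
  unfolding mex_def by (rule Least_equality) (auto simp: not_less[symmetric])

lemma sum_list_map_eq_length:
  "(\<And>x. x \<in> set xs \<Longrightarrow> f x = 1) \<Longrightarrow> (\<Sum>x\<leftarrow>xs. f x) = length xs"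
  by (induction xs) auto

lemma sorted_wrt_mset_eq:
  assumes "symp R" "mset xs = mset ys" "sorted_wrt R xs"
  shows "sorted_wrt R ys"
  using assms(2,3)
proof (induction xs arbitrary: ys)
  case (Cons x xs)
  have "x \<in> set ys"
    using mset_eq_setD[OF Cons.prems(1)] by auto
  then obtain us vs where ys: "ys = us @ x # vs"
    by (meson split_list)
  have xs: "mset xs = mset (us @ vs)"
    using Cons.prems(1) by (simp add: ys)
  have "sorted_wrt R (us @ vs)"
    using Cons.IH[OF xs] Cons.prems(2) by simp
  moreover have "set xs = set (us @ vs)"
    using xs by (rule mset_eq_setD)
  moreover have "R x y" "R y x" if "y \<in> set xs" for y
    using Cons.prems(2) assms(1) that by (simp_all add: symp_def)
  ultimately show ?case
    by (auto simp: ys sorted_wrt_append)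
qed simp

locale factoring_length =
  fixes ok :: "nat list \<Rightarrow> bool" and len :: "nat \<Rightarrow> nat"
  assumes ok_mset_eq: "mset xs = mset ys \<Longrightarrow> ok xs \<Longrightarrow> ok ys"
    and ok_merge: "ok (xs @ ys) \<Longrightarrow> ok (prod_list xs # ys)"
    and len_prod_list: "ok as \<Longrightarrow> 0 \<notin> set as \<Longrightarrow> len (prod_list as) = (\<Sum>a\<leftarrow>as. len a)"
    and ex_unit_length_factorization:
      "0 < m \<Longrightarrow> \<exists>ps. ok ps \<and> prod_list ps = m \<and> (\<forall>p\<in>set ps. 1 < p \<and> len p = 1)"
begin

lemma len_prod_list_units:
  assumes "ok ps" "\<forall>p\<in>set ps. 1 < p \<and> len p = 1"
  shows "len (prod_list ps) = length ps"
proof -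
  have "len (prod_list ps) = (\<Sum>p\<leftarrow>ps. len p)"
    using assms by (intro len_prod_list) auto
  then show ?thesis
    using assms(2) sum_list_map_eq_length[of ps len] by simp
qed

lemma one_le_len: "1 < a \<Longrightarrow> 1 \<le> len a"
proof -
  assume "1 < a"
  then obtain ps where ps: "ok ps" "prod_list ps = a" "\<forall>p\<in>set ps. 1 < p \<and> len p = 1"
    using ex_unit_length_factorization[of a] by auto
  with \<open>1 < a\<close> have "ps \<noteq> []"
    by auto
  with ps show ?thesis
    using len_prod_list_units[of ps] by (simp add: Suc_le_eq)
qed

lemma option_len_sum_le:
  assumes "factoring_option ok n as"
  shows "(\<Sum>a\<leftarrow>as. len a - 1) + 2 \<le> len n"
proof -
  have gt: "\<forall>a\<in>set as. 1 < a" and "ok as" "prod_list as = n" "2 \<le> length as"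
    using assms by (auto simp: factoring_option_def)
  then have "len n = (\<Sum>a\<leftarrow>as. len a)"
    using len_prod_list[of as] by auto
  also have "\<dots> = (\<Sum>a\<leftarrow>as. (len a - 1) + 1)"
    using gt one_le_len by (intro arg_cong[of _ _ sum_list] map_cong) force+
  also have "\<dots> = (\<Sum>a\<leftarrow>as. len a - 1) + length as"
    by (simp only: sum_list_addf sum_list_triv) simp
  finally show ?thesis
    using \<open>2 \<le> length as\<close> by linarith
qed

lemma ex_option_nim_sum:
  assumes "0 < n" "t + 1 < len n"
  shows "\<exists>as. factoring_option ok n as \<and> nim_sum (map (\<lambda>a. len a - 1) as) = t"
proof -
  obtain ps where ps: "ok ps" "prod_list ps = n" "\<forall>p\<in>set ps. 1 < p \<and> len p = 1"
    using ex_unit_length_factorization[OF assms(1)] by auto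
  have len_ps: "length ps = len n"
    using len_prod_list_units[OF ps(1,3)] ps(2) by simp
  define a where "a = prod_list (take (t + 1) ps)"
  define rs where "rs = drop (t + 1) ps"
  have rs: "rs \<noteq> []" "\<forall>r\<in>set rs. 1 < r \<and> len r = 1"
    using assms(2) ps(3) len_ps by (auto simp: rs_def dest: in_set_dropD)
  have "1 < a"
    unfolding a_def using assms(2) ps(3) len_ps
    by (intro one_less_prod_list) (auto dest: in_set_takeD)
  have "ok (a # rs)"
    unfolding a_def rs_def using ps(1) by (intro ok_merge) simp
  moreover have prod: "prod_list (a # rs) = n"
    unfolding a_def rs_def ps(2)[symmetric]
    by (simp flip: prod_list.append)
  ultimately have "len n = len a + length rs"
    using len_prod_list[of "a # rs"] \<open>1 < a\<close> rs(2) sum_list_map_eq_length[of rs len]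
    by auto
  then have "len a = t + 1"
    using len_ps assms(2) by (simp add: rs_def)
  define as where "as = sort (a # rs)"
  have mset_as: "mset as = mset (a # rs)"
    by (simp add: as_def)
  have "factoring_option ok n as"
    unfolding factoring_option_def
  proof (intro conjI)
    show "2 \<le> length as"
      using rs(1) by (cases rs) (simp_all add: as_def)
    show "sorted as"
      unfolding as_def by (rule sorted_sort)
    show "\<forall>x\<in>set as. 1 < x"
      using \<open>1 < a\<close> rs(2) unfolding as_def set_sort by simp
    show "prod_list as = n"
      using prod mset_as by (metis prod_mset_prod_list)
    show "ok as"
      using ok_mset_eq[OF mset_as[symmetric] \<open>ok (a # rs)\<close>] .
  qed
  moreover have "(\<Sum>r\<leftarrow>rs. len r - 1) = 0"
    using rs(2) by (simp add: sum_list_eq_0_iff)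
  then have "nim_sum (map (\<lambda>a. len a - 1) rs) = 0"
    using nim_sum_le_sum_list[of "map (\<lambda>a. len a - 1) rs"] by linarith
  then have "nim_sum (map (\<lambda>a. len a - 1) as) = t"
    using nim_sum_mset_eq[of "map (\<lambda>a. len a - 1) as" "map (\<lambda>a. len a - 1) (a # rs)"]
    by (simp add: mset_as \<open>len a = t + 1\<close>)
  ultimately show ?thesis
    by blast
qed

theorem SG_fact_eq_len_minus_one: "0 < n \<Longrightarrow> SG_fact ok n = len n - 1"
proof (induction n rule: less_induct)
  case (less n)
  have component_values: "map (SG_fact ok) as = map (\<lambda>a. len a - 1) as"
    if "factoring_option ok n as" for as
  proof (rule map_cong)
    fix a
    assume a: "a \<in> set as"
    with that have "0 < a"
      by (auto simp: factoring_option_def)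
    with a show "SG_fact ok a = len a - 1"
      using less.IH factoring_option_less[OF that] by simp
  qed simp
  show ?case
  proof (subst SG_fact_eq, rule mex_eqI)
    fix v
    assume "v \<in> {nim_sum (map (SG_fact ok) as) | as. factoring_option ok n as}"
    then obtain as where as: "factoring_option ok n as" "v = nim_sum (map (SG_fact ok) as)"
      by blast
    then show "v < len n - 1"
      using nim_sum_le_sum_list[of "map (\<lambda>a. len a - 1) as"] option_len_sum_le[OF as(1)]
        component_values[OF as(1)] by simp
  next
    fix v
    assume "v < len n - 1"
    then have "v + 1 < len n"
      by linarith
    then obtain as where as: "factoring_option ok n as" "nim_sum (map (\<lambda>a. len a - 1) as) = v"
      using ex_option_nim_sum[OF less.prems] by blast
    have "v = nim_sum (map (SG_fact ok) as)"
      unfolding component_values[OF as(1)] using as(2) by simp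
    with as(1) show "v \<in> {nim_sum (map (SG_fact ok) as) | as. factoring_option ok n as}"
      by blast
  qed
qed

end

interpretation bigOmega_length: factoring_length "\<lambda>_. True" bigOmega
proof
  fix as :: "nat list"
  assume "0 \<notin> set as"
  then show "bigOmega (prod_list as) = (\<Sum>a\<leftarrow>as. bigOmega a)"
    by (induction as) (auto simp: bigOmega_def prime_factorization_mult prod_list_zero_iff)
next
  fix m :: nat
  assume "0 < m"
  obtain ps where ps: "mset ps = prime_factorization m"
    using ex_mset by blast
  have "prod_list ps = m"
    using \<open>0 < m\<close> by (simp flip: prod_mset_prod_list add: ps prod_mset_prime_factorization)
  moreover have "1 < p \<and> bigOmega p = 1" if "p \<in> set ps" for p
  proof -
    have "prime p"
      using that by (metis ps in_prime_factors_imp_prime set_mset_mset)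
    then show ?thesis
      using prime_gt_1_nat by (simp add: bigOmega_def prime_factorization_prime)
  qed
  ultimately show "\<exists>ps. True \<and> prod_list ps = m \<and> (\<forall>p\<in>set ps. 1 < p \<and> bigOmega p = 1)"
    by blast
qed simp_all

lemma prime_factors_disjoint_if_coprime:
  "coprime a b \<Longrightarrow> prime_factors a \<inter> prime_factors b = {}"
  by (auto simp: in_prime_factors_iff dest: coprime_common_divisor not_prime_unit)

lemma smallomega_mult_coprime:
  "a \<noteq> 0 \<Longrightarrow> b \<noteq> 0 \<Longrightarrow> coprime a b \<Longrightarrow> smallomega (a * b) = smallomega a + smallomega b"
  by (simp add: smallomega_def prime_factors_product card_Un_disjoint
      prime_factors_disjoint_if_coprime)

lemma smallomega_prime_power: "prime p \<Longrightarrow> 0 < k \<Longrightarrow> smallomega (p ^ k) = 1"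
  by (simp add: smallomega_def prime_factorization_prime_power)

interpretation smallomega_length: factoring_length "sorted_wrt coprime" smallomega
proof
  fix xs ys :: "nat list"
  show "mset xs = mset ys \<Longrightarrow> sorted_wrt coprime xs \<Longrightarrow> sorted_wrt coprime ys"
    by (rule sorted_wrt_mset_eq) (auto simp: symp_def coprime_commute)
  show "sorted_wrt coprime (xs @ ys) \<Longrightarrow> sorted_wrt coprime (prod_list xs # ys)"
    by (auto simp: sorted_wrt_append intro: prod_list_coprime_left)
next
  fix as :: "nat list"
  assume "sorted_wrt coprime as" "0 \<notin> set as"
  then show "smallomega (prod_list as) = (\<Sum>a\<leftarrow>as. smallomega a)"
  proof (induction as)
    case (Cons a as)
    then have "coprime a (prod_list as)"
      by (auto intro: prod_list_coprime_right)
    with Cons show ?case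
      by (simp add: smallomega_mult_coprime prod_list_zero_iff)
  qed (simp add: smallomega_def)
next
  fix m :: nat
  assume "0 < m"
  define qs where "qs = sorted_list_of_set (prime_factors m)"
  define ps where "ps = map (\<lambda>p. p ^ multiplicity p m) qs"
  have qs: "sorted_wrt (<) qs" "distinct qs" "set qs = prime_factors m"
    by (simp_all add: qs_def)
  have "sorted_wrt coprime ps"
    unfolding ps_def sorted_wrt_map
    by (rule sorted_wrt_mono_rel[OF _ qs(1)])
      (auto simp: qs(3) in_prime_factors_iff primes_coprime)
  moreover have "prod_list ps = m"
    using qs(2,3) \<open>0 < m\<close>
    by (simp add: ps_def prod.distinct_set_conv_list[symmetric] prod_prime_factors)
  moreover have "1 < p \<and> smallomega p = 1" if p: "p \<in> set ps" for p
  proof -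
    obtain q where q: "prime q" "0 < multiplicity q m" "p = q ^ multiplicity q m"
      using p by (auto simp: ps_def qs(3) prime_factors_multiplicity)
    then show ?thesis
      using one_less_power[OF prime_gt_1_nat[OF q(1)] q(2)] smallomega_prime_power by simp
  qed
  ultimately show
    "\<exists>ps. sorted_wrt coprime ps \<and> prod_list ps = m \<and> (\<forall>p\<in>set ps. 1 < p \<and> smallomega p = 1)"
    by blast
qed

theorem mainTheorem13:
  fixes n :: nat
  assumes "n \<ge> 2"
  shows "SG_M n = bigOmega n - 1 \<and> SG_M_coprime n = smallomega n - 1"
proof -
  have "SG_M_coprime = SG_fact (sorted_wrt coprime)"
    unfolding SG_M_coprime_def sorted_wrt_iff_nth_less
    by (intro arg_cong[of _ _ SG_fact] ext) blast
  with assms show ?thesis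
    using bigOmega_length.SG_fact_eq_len_minus_one smallomega_length.SG_fact_eq_len_minus_one
    by (simp add: SG_M_def)
qed

end
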